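(* In the setting of the FedSLoP algorithm (see context), under Assumptions A1 and A2, suppose the stepsize satisfies $\eta^2\le \frac{1-\mu^2}{6L^2\tau^3}$. Then for every round $t$, $$D_t\le \frac{6\tau^4}{1-\mu^2}\,\eta^2\Big(\underline{\delta}\,\|\nabla f(\theta^t)\|^2+\sigma_L^2+\sigma_G^2\Big).$$
   Context: Setting. Let $d,N,\tau$ be positive integers, $r$ an integer with $1\le r\le d$, $\underline{\delta}:=r/d\in(0,1]$, $\mu\in[0,1)$, $\eta>0$, $L>0$. Let $F_1,\dots,F_N:\mathbb{R}^d\to\mathbb{R}$ be differentiable and $f(\theta):=\frac1N\sum_{i=1}^N F_i(\theta)$. Assumption A1: $f$ is bounded below by $f_*>-\infty$, and $f$ and every $F_i$ are $L$-smooth (gradients $L$-Lipschitz). Assumption A2: each stochastic gradient $g_{i,s}=\nabla F_i(\theta_{i,s};\xi_{i,s})$ computed by the algorithm satisfies, conditionally on all randomness generated before it (including $\Pi_t$ and $\theta_{i,s}$), $\mathbb{E}[g_{i,s}]=\nabla F_i(\theta_{i,s})$ and $\mathbb{E}\|g_{i,s}-\nabla F_i(\theta_{i,s})\|^2\le\sigma_L^2$, the minibatch samples of different clients are conditionally independent; and $\|\nabla F_i(\theta)-\nabla f(\theta)\|^2\le\sigma_G^2$ for all $i$ and all $\theta\in\mathbb{R}^d$. Algorithm (FedSLoP, full participation). Start from $\theta^0\in\mathbb{R}^d$. In each round $t=0,1,\dots$: sample $P_t$ from the Haar (uniform, $O(d)$-invariant) distribution on $\mathrm{St}(d,r)=\{P\in\mathbb{R}^{d\times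 r}:P^\top P=I_r\}$, independently of all past randomness and of data sampling, and set $\Pi_t=P_tP_t^\top$. Each client $i=1,\dots,N$ sets $\theta_{i,0}=\theta^t$, $v_{i,0}=0$, and for $s=0,\dots,\tau-1$: $v_{i,s+1}=\mu v_{i,s}+\Pi_t g_{i,s}$, $\theta_{i,s+1}=\theta_{i,s}-\eta v_{i,s+1}$. The server sets $\theta^{t+1}=\theta^t+\frac1N\sum_{i=1}^N(\theta_{i,\tau}-\theta^t)$. Notation. $\mathbb{E}_t[\cdot]$ is the conditional expectation given $\theta^t$ and all randomness up to the start of round $t$ (so it averages over $\Pi_t$ and the round-$t$ minibatches). The drift is $D_t:=\frac1N\sum_{i=1}^N\sum_{s=0}^{\tau-1}\mathbb{E}_t\big[\|\theta_{i,s}-\theta^t\|^2\big]$. *)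

theory Defs
  imports "HOL-Analysis.Analysis" "HOL-Probability.Probability"
begin

definition proj_of :: "real^'r^'d \<Rightarrow> real^'d^'d" where
  "proj_of P = P ** transpose P"

text \<open>P (a random d x r matrix) has the Haar (uniform, O(d)-invariant) distribution on the
  Stiefel manifold St(d,r): it is a measurable random matrix with orthonormal columns
  almost surely, and its law is invariant under left multiplication by every orthogonal Q.
  (This characterizes the Haar probability measure on St(d,r) uniquely.)\<close>
definition haar_stiefel :: "'w measure \<Rightarrow> ('w \<Rightarrow> real^'r^'d) \<Rightarrow> bool" where
  "haar_stiefel M P \<longleftrightarrow>
     P \<in> borel_measurable M \<and>
     (AE w in M. transpose (P w) ** P w = mat 1) \<and>
     (\<forall>Q::real^'d^'d. orthogonal_matrix Q \<longrightarrow>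
        distr M borel (\<lambda>w. Q ** P w) = distr M borel P)"

primrec fedslop_local ::
  "real \<Rightarrow> real \<Rightarrow> real^'d \<Rightarrow> real^'d^'d \<Rightarrow> (nat \<Rightarrow> real^'d) \<Rightarrow> nat \<Rightarrow> (real^'d) \<times> (real^'d)" where
  "fedslop_local \<mu> \<eta> th0 Proj g 0 = (0, th0)"
| "fedslop_local \<mu> \<eta> th0 Proj g (Suc s) =
     (let (v, th) = fedslop_local \<mu> \<eta> th0 Proj g s;
          v' = \<mu> *\<^sub>R v + Proj *v g s
      in (v', th - \<eta> *\<^sub>R v'))"

definition fedslop_theta ::
  "real \<Rightarrow> real \<Rightarrow> real^'d \<Rightarrow> real^'d^'d \<Rightarrow> (nat \<Rightarrow> real^'d) \<Rightarrow> nat \<Rightarrow> real^'d" where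
  "fedslop_theta \<mu> \<eta> th0 Proj g s = snd (fedslop_local \<mu> \<eta> th0 Proj g s)"

definition before_step ::
  "'w measure \<Rightarrow> ('w \<Rightarrow> real^'r^'d) \<Rightarrow> (nat \<Rightarrow> nat \<Rightarrow> 'w \<Rightarrow> real^'d) \<Rightarrow> nat \<Rightarrow> nat \<Rightarrow> 'w measure" where
  "before_step M P g N s =
     sigma (space M)
       ({P -` A \<inter> space M | A. A \<in> sets (borel :: (real^'r^'d) measure)} \<union>
        {g j s' -` A \<inter> space M | A j s'. A \<in> sets (borel :: (real^'d) measure) \<and> j < N \<and> s' < s})"

end

theory Submission
  imports Defs
begin

(* Unrolling the heavy-ball recursion gives theta_s - theta_0 = -eta * sum_{j<s} c_{s,j} Pi g_j with
   weights c_{s,j} = sum_{m<s-j} mu^m <= min (s - j) (1/(1 - mu)), so Cauchy-Schwarz yields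
   |theta_s - theta_0|^2 <= eta^2 s (s+1)/(1 - mu^2) * sum_{j<s} |Pi g_j|^2.  Split Pi g_j into
   sampling noise, the L-Lipschitz drift of grad F_i, the heterogeneity grad F_i - grad f at theta_0,
   and Pi grad f(theta_0); since Pi = P P^T is a contraction with E |Pi z|^2 = (r/d) |z|^2 for
   Haar-distributed P, the expected drifts e_s satisfy
     e_s <= 4 eta^2 s (s+1)/(1 - mu^2) * sum_{j<s} (X + L^2 e_j),
   X = delta |grad f(theta_0)|^2 + sigma_L^2 + sigma_G^2.  Summing over s < tau gives
   (1 - 4 eta^2 L^2 tau^3/(1 - mu^2)) * sum_s e_s <= 2 eta^2 tau^4 X/(1 - mu^2), and the step-size
   condition makes the factor on the left at least 1/3. *)

lemma fedslop_local_Suc_fst [simp]: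
  "fst (fedslop_local \<mu> \<eta> th0 Pr g (Suc s)) = \<mu> *\<^sub>R fst (fedslop_local \<mu> \<eta> th0 Pr g s) + Pr *v g s"
  by (simp add: case_prod_beta Let_def)

lemma fedslop_local_Suc_snd [simp]:
  "snd (fedslop_local \<mu> \<eta> th0 Pr g (Suc s)) =
     snd (fedslop_local \<mu> \<eta> th0 Pr g s) - \<eta> *\<^sub>R fst (fedslop_local \<mu> \<eta> th0 Pr g (Suc s))"
  by (simp add: case_prod_beta Let_def)

declare fedslop_local.simps(2) [simp del]

lemma fedslop_local_fst_eq:
  "fst (fedslop_local \<mu> \<eta> th0 Pr g s) = (\<Sum>j<s. (\<mu> ^ (s - 1 - j)) *\<^sub>R (Pr *v g j))"
proof (induction s)
  case 0
  then show ?case by simp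
next
  case (Suc s)
  have "\<mu> *\<^sub>R (\<Sum>j<s. (\<mu> ^ (s - 1 - j)) *\<^sub>R (Pr *v g j)) = (\<Sum>j<s. (\<mu> ^ (s - j)) *\<^sub>R (Pr *v g j))"
    unfolding scaleR_sum_right
    by (intro sum.cong refl) (simp add: Suc_diff_Suc[symmetric] power_Suc[symmetric] del: power_Suc)
  then show ?case
    unfolding fedslop_local_Suc_fst Suc.IH by simp
qed

definition momentum_weight :: "real \<Rightarrow> nat \<Rightarrow> nat \<Rightarrow> real" where
  "momentum_weight \<mu> s j = (\<Sum>m<s - j. \<mu> ^ m)"

lemma fedslop_theta_eq:
  "fedslop_theta \<mu> \<eta> th0 Pr g s = th0 - \<eta> *\<^sub>R (\<Sum>j<s. momentum_weight \<mu> s j *\<^sub>R (Pr *v g j))"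
  unfolding fedslop_theta_def
proof (induction s)
  case 0
  then show ?case by simp
next
  case (Suc s)
  have weight_Suc: "momentum_weight \<mu> (Suc s) j = momentum_weight \<mu> s j + \<mu> ^ (s - j)" if "j < s" for j
    using that by (simp add: momentum_weight_def Suc_diff_le)
  have "(\<Sum>j<s. momentum_weight \<mu> (Suc s) j *\<^sub>R (Pr *v g j))
      = (\<Sum>j<s. momentum_weight \<mu> s j *\<^sub>R (Pr *v g j) + (\<mu> ^ (s - j)) *\<^sub>R (Pr *v g j))"
    by (intro sum.cong) (auto simp: weight_Suc scaleR_add_left)
  then have "(\<Sum>j<Suc s. momentum_weight \<mu> (Suc s) j *\<^sub>R (Pr *v g j))
      = (\<Sum>j<s. momentum_weight \<mu> s j *\<^sub>R (Pr *v g j)) + ((\<Sum>j<s. (\<mu> ^ (s - j)) *\<^sub>R (Pr *v g j)) + Pr *v g s)"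
    by (simp add: sum.distrib momentum_weight_def[of _ _ s])
  also have "(\<Sum>j<s. (\<mu> ^ (s - j)) *\<^sub>R (Pr *v g j)) + Pr *v g s = fst (fedslop_local \<mu> \<eta> th0 Pr g (Suc s))"
    by (simp add: fedslop_local_fst_eq scaleR_sum_right)
  finally show ?case
    by (simp add: Suc algebra_simps)
qed

lemma momentum_weight_nonneg: "0 \<le> \<mu> \<Longrightarrow> 0 \<le> momentum_weight \<mu> s j"
  unfolding momentum_weight_def by (intro sum_nonneg) auto

lemma momentum_weight_le_diff: "0 \<le> \<mu> \<Longrightarrow> \<mu> \<le> 1 \<Longrightarrow> momentum_weight \<mu> s j \<le> real (s - j)"
  unfolding momentum_weight_def
  using sum_bounded_above[of "{..<s - j}" "\<lambda>m. \<mu> ^ m" 1] by (simp add: power_le_one)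

lemma momentum_weight_le_geometric: "0 \<le> \<mu> \<Longrightarrow> \<mu> < 1 \<Longrightarrow> momentum_weight \<mu> s j \<le> 1 / (1 - \<mu>)"
  unfolding momentum_weight_def by (simp add: sum_gp_strict divide_right_mono)

lemma sum_lessThan_diff: "(\<Sum>j<s. real (s - j)) = real s * (real s + 1) / 2"
proof (induction s)
  case 0
  then show ?case by simp
next
  case (Suc s)
  have "(\<Sum>j<Suc s. real (Suc s - j)) = (\<Sum>j<s. real (s - j)) + real s + 1"
    by (simp add: Suc_diff_le sum.distrib)
  then show ?case
    unfolding Suc.IH by (simp add: field_simps)
qed

lemma sum_momentum_weight_sq_le:
  assumes "0 \<le> \<mu>" "\<mu> < 1"
  shows "(\<Sum>j<s. (momentum_weight \<mu> s j)\<^sup>2) \<le> real s * (real s + 1) / (1 - \<mu>\<^sup>2)"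
proof -
  have "1 - \<mu>\<^sup>2 = (1 - \<mu>) * (1 + \<mu>)"
    by (simp add: power2_eq_square algebra_simps)
  then have "1 / (1 - \<mu>) \<le> 2 / (1 - \<mu>\<^sup>2)"
    using assms by (simp add: divide_simps)
  have "(momentum_weight \<mu> s j)\<^sup>2 \<le> real (s - j) * (2 / (1 - \<mu>\<^sup>2))" for j
  proof -
    have "(momentum_weight \<mu> s j)\<^sup>2 \<le> real (s - j) * (1 / (1 - \<mu>))"
      unfolding power2_eq_square using assms
      by (intro mult_mono momentum_weight_le_diff momentum_weight_le_geometric momentum_weight_nonneg) auto
    also have "\<dots> \<le> real (s - j) * (2 / (1 - \<mu>\<^sup>2))"
      by (intro mult_left_mono \<open>1 / (1 - \<mu>) \<le> _\<close>) simp
    finally show ?thesis .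
  qed
  then have "(\<Sum>j<s. (momentum_weight \<mu> s j)\<^sup>2) \<le> (\<Sum>j<s. real (s - j)) * (2 / (1 - \<mu>\<^sup>2))"
    unfolding sum_distrib_right by (intro sum_mono)
  then show ?thesis
    unfolding sum_lessThan_diff by simp
qed

lemma fedslop_theta_dist_sq_le:
  assumes "0 \<le> \<mu>" "\<mu> < 1"
  shows "(norm (fedslop_theta \<mu> \<eta> th0 Pr g s - th0))\<^sup>2
           \<le> \<eta>\<^sup>2 * (real s * (real s + 1) / (1 - \<mu>\<^sup>2)) * (\<Sum>j<s. (norm (Pr *v g j))\<^sup>2)"
proof -
  let ?c = "momentum_weight \<mu> s"
  have "norm (\<Sum>j<s. ?c j *\<^sub>R (Pr *v g j)) \<le> (\<Sum>j<s. ?c j * norm (Pr *v g j))"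
    using norm_sum[of "\<lambda>j. ?c j *\<^sub>R (Pr *v g j)"] momentum_weight_nonneg[OF assms(1)] by simp
  then have "(norm (\<Sum>j<s. ?c j *\<^sub>R (Pr *v g j)))\<^sup>2 \<le> (\<Sum>j<s. ?c j * norm (Pr *v g j))\<^sup>2"
    by (simp add: power_mono)
  also have "\<dots> \<le> (\<Sum>j<s. (?c j)\<^sup>2) * (\<Sum>j<s. (norm (Pr *v g j))\<^sup>2)"
    by (rule Cauchy_Schwarz_ineq_sum)
  also have "\<dots> \<le> (real s * (real s + 1) / (1 - \<mu>\<^sup>2)) * (\<Sum>j<s. (norm (Pr *v g j))\<^sup>2)"
    by (intro mult_right_mono sum_momentum_weight_sq_le assms sum_nonneg) auto
  finally have bound: "(norm (\<Sum>j<s. ?c j *\<^sub>R (Pr *v g j)))\<^sup>2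
      \<le> (real s * (real s + 1) / (1 - \<mu>\<^sup>2)) * (\<Sum>j<s. (norm (Pr *v g j))\<^sup>2)" .
  have "(norm (fedslop_theta \<mu> \<eta> th0 Pr g s - th0))\<^sup>2 = \<eta>\<^sup>2 * (norm (\<Sum>j<s. ?c j *\<^sub>R (Pr *v g j)))\<^sup>2"
    by (simp add: fedslop_theta_eq power_mult_distrib)
  also have "\<dots> \<le> \<eta>\<^sup>2 * ((real s * (real s + 1) / (1 - \<mu>\<^sup>2)) * (\<Sum>j<s. (norm (Pr *v g j))\<^sup>2))"
    using bound by (rule mult_left_mono) simp
  finally show ?thesis
    by (simp only: mult.assoc)
qed

lemma power2_norm_add_le:
  fixes a b :: "'a::real_normed_vector"
  shows "(norm (a + b))\<^sup>2 \<le> 2 * ((norm a)\<^sup>2 + (norm b)\<^sup>2)"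
proof -
  have "(norm (a + b))\<^sup>2 \<le> (norm a + norm b)\<^sup>2"
    by (simp add: norm_triangle_ineq power_mono)
  also have "\<dots> \<le> 2 * ((norm a)\<^sup>2 + (norm b)\<^sup>2)"
    using zero_le_power2[of "norm a - norm b"] unfolding power2_diff power2_sum by (simp add: algebra_simps)
  finally show ?thesis .
qed

lemma power2_norm_add4_le:
  fixes a b c d :: "'a::real_normed_vector"
  shows "(norm (a + b + c + d))\<^sup>2 \<le> 4 * ((norm a)\<^sup>2 + (norm b)\<^sup>2 + (norm c)\<^sup>2 + (norm d)\<^sup>2)"
proof -
  have "(norm (a + b + c + d))\<^sup>2 \<le> 2 * ((norm (a + b))\<^sup>2 + (norm (c + d))\<^sup>2)"
    using power2_norm_add_le[of "a + b" "c + d"] by (simp add: add.assoc)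
  also have "\<dots> \<le> 4 * ((norm a)\<^sup>2 + (norm b)\<^sup>2 + (norm c)\<^sup>2 + (norm d)\<^sup>2)"
    using power2_norm_add_le[of a b] power2_norm_add_le[of c d] by simp
  finally show ?thesis .
qed

text \<open>Used with \<open>x\<close> a local iterate, \<open>y\<close> the start of the round, \<open>G\<close> the client's gradient
  and \<open>Gf\<close> the global gradient at \<open>y\<close>.\<close>
lemma power2_norm_contraction_stoch_grad_le:
  fixes Pr :: "real^'n^'n"
  assumes contraction: "\<And>u. norm (Pr *v u) \<le> norm u"
    and lipschitz: "norm (G x - G y) \<le> L * norm (x - y)"
    and heterogeneity: "(norm (G y - Gf))\<^sup>2 \<le> \<sigma>\<^sup>2"
  shows "(norm (Pr *v v))\<^sup>2
           \<le> 4 * ((norm (v - G x))\<^sup>2 + \<sigma>\<^sup>2 + (norm (Pr *v Gf))\<^sup>2 + L\<^sup>2 * (norm (x - y))\<^sup>2)"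
proof -
  have contraction_sq: "(norm (Pr *v u))\<^sup>2 \<le> (norm u)\<^sup>2" for u
    using contraction by (simp add: power_mono)
  have decomposition: "Pr *v v = Pr *v (v - G x) + Pr *v (G x - G y) + Pr *v (G y - Gf) + Pr *v Gf"
    by (simp flip: matrix_vector_right_distrib)
  have "(norm (Pr *v v))\<^sup>2 \<le> 4 * ((norm (Pr *v (v - G x)))\<^sup>2 + (norm (Pr *v (G x - G y)))\<^sup>2
                                        + (norm (Pr *v (G y - Gf)))\<^sup>2 + (norm (Pr *v Gf))\<^sup>2)"
    unfolding decomposition by (rule power2_norm_add4_le)
  also have "\<dots> \<le> 4 * ((norm (v - G x))\<^sup>2 + L\<^sup>2 * (norm (x - y))\<^sup>2 + \<sigma>\<^sup>2 + (norm (Pr *v Gf))\<^sup>2)"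
  proof -
    have lipschitz_sq: "(norm (Pr *v (G x - G y)))\<^sup>2 \<le> L\<^sup>2 * (norm (x - y))\<^sup>2"
    proof -
      have "norm (Pr *v (G x - G y)) \<le> L * norm (x - y)"
        using contraction lipschitz by (rule order_trans)
      then show ?thesis
        by (simp add: power_mono flip: power_mult_distrib)
    qed
    show ?thesis
      by (intro mult_left_mono add_mono order_refl lipschitz_sq
          order_trans[OF contraction_sq heterogeneity] contraction_sq) simp
  qed
  finally show ?thesis
    by (simp add: ac_simps)
qed

lemma fedslop_theta_dist_sq_le_noise:
  fixes Pr :: "real^'n^'n" and g :: "nat \<Rightarrow> real^'n" and th0 :: "real^'n" and \<mu> \<eta> :: real
  defines "\<theta> \<equiv> fedslop_theta \<mu> \<eta> th0 Pr g"
  assumes mu: "0 \<le> \<mu>" "\<mu> < 1"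
    and contraction: "\<And>u. norm (Pr *v u) \<le> norm u"
    and lipschitz: "\<And>x y. norm (G x - G y) \<le> L * norm (x - y)"
    and heterogeneity: "(norm (G th0 - Gf))\<^sup>2 \<le> \<sigma>\<^sup>2"
  shows "(norm (\<theta> s - th0))\<^sup>2 \<le> 4 * \<eta>\<^sup>2 * (real s * (real s + 1) / (1 - \<mu>\<^sup>2)) *
           (\<Sum>j<s. (norm (g j - G (\<theta> j)))\<^sup>2 + \<sigma>\<^sup>2 + (norm (Pr *v Gf))\<^sup>2 + L\<^sup>2 * (norm (\<theta> j - th0))\<^sup>2)"
proof -
  have "(norm (\<theta> s - th0))\<^sup>2 \<le> \<eta>\<^sup>2 * (real s * (real s + 1) / (1 - \<mu>\<^sup>2)) * (\<Sum>j<s. (norm (Pr *v g j))\<^sup>2)"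
    unfolding \<theta>_def by (rule fedslop_theta_dist_sq_le[OF mu])
  also have "\<dots> \<le> \<eta>\<^sup>2 * (real s * (real s + 1) / (1 - \<mu>\<^sup>2)) *
      (4 * (\<Sum>j<s. (norm (g j - G (\<theta> j)))\<^sup>2 + \<sigma>\<^sup>2 + (norm (Pr *v Gf))\<^sup>2 + L\<^sup>2 * (norm (\<theta> j - th0))\<^sup>2))"
  proof (rule mult_left_mono)
    show "(\<Sum>j<s. (norm (Pr *v g j))\<^sup>2)
      \<le> 4 * (\<Sum>j<s. (norm (g j - G (\<theta> j)))\<^sup>2 + \<sigma>\<^sup>2 + (norm (Pr *v Gf))\<^sup>2 + L\<^sup>2 * (norm (\<theta> j - th0))\<^sup>2)"
      unfolding sum_distrib_left
      by (intro sum_mono power2_norm_contraction_stoch_grad_le contraction lipschitz heterogeneity)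
    have "\<mu>\<^sup>2 < 1"
      using mu by (simp add: abs_square_less_1)
    then show "0 \<le> \<eta>\<^sup>2 * (real s * (real s + 1) / (1 - \<mu>\<^sup>2))"
      by simp
  qed
  finally show ?thesis
    by (simp only: ac_simps)
qed

lemma stiefel_norm_mult:
  fixes Pm :: "real^'r^'d"
  assumes "transpose Pm ** Pm = mat 1"
  shows "norm (Pm *v u) = norm u"
proof -
  have "(norm (Pm *v u))\<^sup>2 = inner ((Pm *v u) v* Pm) u"
    by (simp add: power2_norm_eq_inner dot_lmul_matrix)
  also have "(Pm *v u) v* Pm = u"
    by (simp add: matrix_vector_mul_assoc assms del: transpose_matrix_vector flip: transpose_matrix_vector)
  finally show ?thesis
    by (simp add: power2_norm_eq_inner power2_eq_iff_nonneg flip: power2_norm_eq_inner)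
qed

lemma stiefel_norm_proj_of:
  fixes Pm :: "real^'r^'d"
  assumes "transpose Pm ** Pm = mat 1"
  shows "norm (proj_of Pm *v x) = norm (transpose Pm *v x)"
proof -
  have "proj_of Pm *v x = Pm *v (transpose Pm *v x)"
    by (simp add: proj_of_def matrix_vector_mul_assoc del: transpose_matrix_vector)
  then show ?thesis
    by (simp only: stiefel_norm_mult[OF assms])
qed

lemma stiefel_norm_transpose_le:
  fixes Pm :: "real^'r^'d"
  assumes "transpose Pm ** Pm = mat 1"
  shows "norm (transpose Pm *v x) \<le> norm x"
proof -
  let ?u = "transpose Pm *v x"
  have "norm ?u * norm ?u = inner x (Pm *v ?u)"
    by (simp add: dot_lmul_matrix power2_norm_eq_inner flip: power2_eq_square)
  also have "\<dots> \<le> norm x * norm ?u"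
    using norm_cauchy_schwarz[of x "Pm *v ?u"] by (simp add: stiefel_norm_mult[OF assms])
  finally show ?thesis
    by (cases "norm ?u = 0") (auto simp: mult_le_cancel_right)
qed

lemma stiefel_norm_proj_of_le:
  fixes Pm :: "real^'r^'d"
  assumes "transpose Pm ** Pm = mat 1"
  shows "norm (proj_of Pm *v x) \<le> norm x"
  using stiefel_norm_proj_of[OF assms] stiefel_norm_transpose_le[OF assms] by simp

text \<open>Squared Frobenius norm of \<open>P\<close> summed by rows versus by columns: \<open>trace (P\<^sup>T P) = r\<close>.\<close>
lemma stiefel_sum_norm_transpose_axis:
  fixes Pm :: "real^'r^'d"
  assumes "transpose Pm ** Pm = mat 1"
  shows "(\<Sum>k\<in>UNIV. (norm (transpose Pm *v axis k 1))\<^sup>2) = real CARD('r)"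
proof -
  have row: "transpose Pm *v axis k 1 = Pm $ k" for k
    by (simp add: vec_eq_iff matrix_vector_mult_def transpose_def axis_def if_distrib cong: if_cong)
  have "(\<Sum>k\<in>UNIV. (norm (transpose Pm *v axis k 1))\<^sup>2) = (\<Sum>k\<in>UNIV. \<Sum>l\<in>UNIV. Pm $ k $ l * Pm $ k $ l)"
    unfolding row by (simp add: power2_norm_eq_inner inner_vec_def)
  also have "\<dots> = (\<Sum>l\<in>UNIV. \<Sum>k\<in>UNIV. Pm $ k $ l * Pm $ k $ l)"
    by (rule sum.swap)
  also have "\<dots> = (\<Sum>l\<in>UNIV. (transpose Pm ** Pm) $ l $ l)"
    by (simp add: matrix_matrix_mult_def transpose_def)
  finally show ?thesis
    unfolding assms by (simp add: mat_def)
qed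

lemma haar_stiefelD:
  assumes "haar_stiefel M P"
  shows "P \<in> borel_measurable M"
    and "AE w in M. transpose (P w) ** P w = mat 1"
    and "\<And>Q. orthogonal_matrix Q \<Longrightarrow> distr M borel (\<lambda>w. Q ** P w) = distr M borel P"
  using assms unfolding haar_stiefel_def by auto

lemma integral_haar_stiefel_mult_left:
  fixes P :: "'w \<Rightarrow> real^'r::finite^'d::finite" and h :: "real^'r^'d \<Rightarrow> real"
  assumes "haar_stiefel M P" "orthogonal_matrix Q" "h \<in> borel_measurable borel"
  shows "(\<integral>w. h (Q ** P w) \<partial>M) = (\<integral>w. h (P w) \<partial>M)"
proof -
  have "continuous_on UNIV (\<lambda>B::real^'r^'d. Q ** B)"
    unfolding matrix_matrix_mult_def by (intro continuous_intros)
  then have "(\<lambda>w. Q ** P w) \<in> borel_measurable M"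
    using haar_stiefelD(1)[OF assms(1)] by (rule borel_measurable_continuous_on)
  then have "(\<integral>w. h (Q ** P w) \<partial>M) = integral\<^sup>L (distr M borel (\<lambda>w. Q ** P w)) h"
    using assms(3) by (rule integral_distr[symmetric])
  also have "\<dots> = integral\<^sup>L (distr M borel P) h"
    using haar_stiefelD(3)[OF assms(1,2)] by simp
  also have "\<dots> = (\<integral>w. h (P w) \<partial>M)"
    using haar_stiefelD(1)[OF assms(1)] assms(3) by (rule integral_distr)
  finally show ?thesis .
qed

lemma continuous_on_norm_transpose_sq: "continuous_on UNIV (\<lambda>A::real^'r^'d. (norm (transpose A *v z))\<^sup>2)"
  unfolding matrix_vector_mult_def transpose_def by (intro continuous_intros)

lemma integrable_haar_stiefel_norm_transpose_sq:
  fixes P :: "'w \<Rightarrow> real^'r::finite^'d::finite"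
  assumes "prob_space M" "haar_stiefel M P"
  shows "integrable M (\<lambda>w. (norm (transpose (P w) *v z))\<^sup>2)"
proof (rule finite_measure.integrable_const_bound)
  show "finite_measure M"
    using assms(1) by (rule prob_space.finite_measure)
  show "AE w in M. norm ((norm (transpose (P w) *v z))\<^sup>2) \<le> (norm z)\<^sup>2"
    using haar_stiefelD(2)[OF assms(2)] by eventually_elim (simp add: power_mono stiefel_norm_transpose_le del: transpose_matrix_vector)
  show "(\<lambda>w. (norm (transpose (P w) *v z))\<^sup>2) \<in> borel_measurable M"
    using continuous_on_norm_transpose_sq haar_stiefelD(1)[OF assms(2)] by (rule borel_measurable_continuous_on)
qed

text \<open>With \<open>Q\<close> orthogonal and \<open>Q e\<^sub>k = z\<close> we have \<open>(Q P)\<^sup>T z = P\<^sup>T e\<^sub>k\<close>, and \<open>Q P\<close> has the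
  law of \<open>P\<close>.\<close>
lemma integral_haar_stiefel_norm_transpose_unit:
  fixes P :: "'w \<Rightarrow> real^'r::finite^'d::finite"
  assumes "haar_stiefel M P" "norm z = 1"
  shows "(\<integral>w. (norm (transpose (P w) *v z))\<^sup>2 \<partial>M) = (\<integral>w. (norm (transpose (P w) *v axis k 1))\<^sup>2 \<partial>M)"
proof -
  obtain Q where Q: "orthogonal_matrix Q" "Q *v axis k 1 = z"
    using orthogonal_matrix_exists_basis[OF assms(2)] by metis
  have "transpose Q *v z = axis k 1"
    using Q unfolding orthogonal_matrix by (metis matrix_vector_mul_assoc matrix_vector_mul_lid)
  then have "transpose (Q ** P w) *v z = transpose (P w) *v axis k 1" for w
    by (metis matrix_transpose_mul matrix_vector_mul_assoc)
  then have "(\<integral>w. (norm (transpose (P w) *v axis k 1))\<^sup>2 \<partial>M) = (\<integral>w. (norm (transpose (Q ** P w) *v z))\<^sup>2 \<partial>M)"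
    by simp
  also have "\<dots> = (\<integral>w. (norm (transpose (P w) *v z))\<^sup>2 \<partial>M)"
    using assms(1) Q(1) continuous_on_norm_transpose_sq
    by (intro integral_haar_stiefel_mult_left borel_measurable_continuous_onI)
  finally show ?thesis ..
qed

lemma integral_haar_stiefel_norm_transpose_sq:
  fixes P :: "'w \<Rightarrow> real^'r::finite^'d::finite"
  assumes "prob_space M" "haar_stiefel M P"
  shows "(\<integral>w. (norm (transpose (P w) *v z))\<^sup>2 \<partial>M) = real CARD('r) / real CARD('d) * (norm z)\<^sup>2"
proof -
  interpret prob_space M by (rule assms(1))
  obtain k0 :: 'd where True by simp
  define c where "c = (\<integral>w. (norm (transpose (P w) *v axis k0 1))\<^sup>2 \<partial>M)"
  have c_axis: "(\<integral>w. (norm (transpose (P w) *v axis k 1))\<^sup>2 \<partial>M) = c" for k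
    unfolding c_def using integral_haar_stiefel_norm_transpose_unit[OF assms(2), of "axis k 1" k0] by simp
  have "real CARD('d) * c = (\<Sum>k\<in>UNIV. \<integral>w. (norm (transpose (P w) *v axis k 1))\<^sup>2 \<partial>M)"
    by (simp add: c_axis del: transpose_matrix_vector)
  also have "\<dots> = (\<integral>w. (\<Sum>k\<in>UNIV. (norm (transpose (P w) *v axis k 1))\<^sup>2) \<partial>M)"
    using integrable_haar_stiefel_norm_transpose_sq[OF assms] by (simp add: Bochner_Integration.integral_sum)
  also have "\<dots> = (\<integral>w. real CARD('r) \<partial>M)"
  proof (rule integral_cong_AE)
    show "(\<lambda>w. \<Sum>k\<in>UNIV. (norm (transpose (P w) *v axis k 1))\<^sup>2) \<in> borel_measurable M"
      using integrable_haar_stiefel_norm_transpose_sq[OF assms]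
      by (intro borel_measurable_sum borel_measurable_integrable)
    show "AE w in M. (\<Sum>k\<in>UNIV. (norm (transpose (P w) *v axis k 1))\<^sup>2) = real CARD('r)"
      using haar_stiefelD(2)[OF assms(2)]
      by eventually_elim (simp add: stiefel_sum_norm_transpose_axis del: transpose_matrix_vector)
  qed simp
  finally have c: "c = real CARD('r) / real CARD('d)"
    by (simp add: prob_space field_simps)
  show ?thesis
  proof (cases "z = 0")
    case False
    have "transpose (P w) *v z = norm z *\<^sub>R (transpose (P w) *v (z /\<^sub>R norm z))" for w
      using False by (simp add: matrix_vector_mult_scaleR)
    then have "(\<integral>w. (norm (transpose (P w) *v z))\<^sup>2 \<partial>M)
        = (norm z)\<^sup>2 * (\<integral>w. (norm (transpose (P w) *v (z /\<^sub>R norm z)))\<^sup>2 \<partial>M)"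
      by (simp add: power_mult_distrib)
    also have "\<dots> = (norm z)\<^sup>2 * c"
      using False integral_haar_stiefel_norm_transpose_unit[OF assms(2), of "z /\<^sub>R norm z" k0]
      by (simp add: c_def)
    finally show ?thesis
      by (simp add: c)
  qed simp
qed

lemma haar_stiefel_norm_proj_of_sq:
  fixes P :: "'w \<Rightarrow> real^'r::finite^'d::finite"
  assumes "prob_space M" "haar_stiefel M P"
  shows "integrable M (\<lambda>w. (norm (proj_of (P w) *v z))\<^sup>2)"
    and "(\<integral>w. (norm (proj_of (P w) *v z))\<^sup>2 \<partial>M) = real CARD('r) / real CARD('d) * (norm z)\<^sup>2"
proof -
  have proj_eq: "AE w in M. (norm (transpose (P w) *v z))\<^sup>2 = (norm (proj_of (P w) *v z))\<^sup>2"
    using haar_stiefelD(2)[OF assms(2)] by eventually_elim (simp add: stiefel_norm_proj_of)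
  have "continuous_on UNIV (\<lambda>A::real^'r^'d. (norm (proj_of A *v z))\<^sup>2)"
    unfolding proj_of_def matrix_vector_mult_def matrix_matrix_mult_def transpose_def
    by (intro continuous_intros)
  then have measurable: "(\<lambda>w. (norm (proj_of (P w) *v z))\<^sup>2) \<in> borel_measurable M"
    using haar_stiefelD(1)[OF assms(2)] by (rule borel_measurable_continuous_on)
  show "integrable M (\<lambda>w. (norm (proj_of (P w) *v z))\<^sup>2)"
    using integrable_haar_stiefel_norm_transpose_sq[OF assms] measurable proj_eq
    by (rule integrable_cong_AE_imp)
  show "(\<integral>w. (norm (proj_of (P w) *v z))\<^sup>2 \<partial>M) = real CARD('r) / real CARD('d) * (norm z)\<^sup>2"
    using integral_cong_AE[OF _ _ proj_eq] integral_haar_stiefel_norm_transpose_sq[OF assms]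
      integrable_haar_stiefel_norm_transpose_sq[OF assms] measurable borel_measurable_integrable
    by metis
qed

lemma integral_le_of_real_cond_exp_le:
  assumes "prob_space M" "subalgebra M F" "integrable M f"
    and "AE w in M. real_cond_exp M F f w \<le> c"
  shows "(\<integral>w. f w \<partial>M) \<le> c"
proof -
  interpret prob_space M by (rule assms(1))
  interpret finite_measure_subalgebra M F
    by unfold_locales (rule assms(2))
  have "(\<integral>w. f w \<partial>M) = (\<integral>w. real_cond_exp M F f w \<partial>M)"
    using real_cond_exp_int(2)[OF assms(3)] by simp
  also have "\<dots> \<le> (\<integral>w. c \<partial>M)"
    by (rule integral_mono_AE[OF real_cond_exp_int(1)[OF assms(3)] _ assms(4)]) simp
  finally show ?thesis
    by (simp add: prob_space)
qed

lemma subalgebra_before_step: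
  fixes P :: "'w \<Rightarrow> real^'r::finite^'d::finite" and g :: "nat \<Rightarrow> nat \<Rightarrow> 'w \<Rightarrow> real^'d"
  assumes "P \<in> borel_measurable M"
    and "\<And>j s'. j < N \<Longrightarrow> s' < s \<Longrightarrow> g j s' \<in> borel_measurable M"
  shows "subalgebra M (before_step M P g N s)"
proof -
  let ?G = "{P -` A \<inter> space M | A. A \<in> sets (borel :: (real^'r^'d) measure)} \<union>
        {g j s' -` A \<inter> space M | A j s'. A \<in> sets (borel :: (real^'d) measure) \<and> j < N \<and> s' < s}"
  have "?G \<subseteq> sets M"
    using measurable_sets[OF assms(1)] measurable_sets[OF assms(2)] by blast
  moreover have "?G \<subseteq> Pow (space M)"
    by blast
  ultimately show ?thesis
    unfolding subalgebra_def before_step_def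
    by (simp add: sets.sigma_sets_subset sets_measure_of space_measure_of_conv)
qed

lemma borel_measurable_fedslop_local:
  fixes P :: "'w \<Rightarrow> real^'r::finite^'d::finite" and g :: "nat \<Rightarrow> 'w \<Rightarrow> real^'d"
  assumes "P \<in> borel_measurable M" "\<And>j. j < s \<Longrightarrow> g j \<in> borel_measurable M"
  shows "(\<lambda>w. fst (fedslop_local \<mu> \<eta> th0 (proj_of (P w)) (\<lambda>s'. g s' w) s)) \<in> borel_measurable M
       \<and> (\<lambda>w. snd (fedslop_local \<mu> \<eta> th0 (proj_of (P w)) (\<lambda>s'. g s' w) s)) \<in> borel_measurable M"
  using assms(2)
proof (induction s)
  case 0
  then show ?case by simp
next
  case (Suc s)
  have "continuous_on UNIV (\<lambda>x::(real^'r^'d) \<times> (real^'d). proj_of (fst x) *v snd x)"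
    unfolding proj_of_def matrix_vector_mult_def matrix_matrix_mult_def transpose_def
    by (intro continuous_intros)
  then have "(\<lambda>w. proj_of (P w) *v g s w) \<in> borel_measurable M"
    using borel_measurable_continuous_Pair[OF assms(1) Suc.prems[of s], where H="\<lambda>A y. proj_of A *v y"]
    by simp
  then show ?case
    using Suc by (simp add: borel_measurable_add borel_measurable_diff borel_measurable_scaleR)
qed

lemma borel_measurable_fedslop_theta:
  fixes P :: "'w \<Rightarrow> real^'r::finite^'d::finite" and g :: "nat \<Rightarrow> 'w \<Rightarrow> real^'d"
  assumes "P \<in> borel_measurable M" "\<And>j. j < s \<Longrightarrow> g j \<in> borel_measurable M"
  shows "(\<lambda>w. fedslop_theta \<mu> \<eta> th0 (proj_of (P w)) (\<lambda>s'. g s' w) s) \<in> borel_measurable M"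
  using borel_measurable_fedslop_local[OF assms(1), of s g] assms(2) unfolding fedslop_theta_def by blast

lemma integrable_integral_le_recursive:
  fixes h u :: "nat \<Rightarrow> 'w \<Rightarrow> real"
  assumes h_measurable: "\<And>s. s < n \<Longrightarrow> h s \<in> borel_measurable M"
    and h_nonneg: "\<And>s w. 0 \<le> h s w"
    and u_integrable: "\<And>j. j < n \<Longrightarrow> integrable M (u j)"
    and h_bound: "\<And>s. s < n \<Longrightarrow> AE w in M. h s w \<le> c s * (\<Sum>j<s. u j w + b * h j w)"
    and "s < n"
  shows "integrable M (h s) \<and> (\<integral>w. h s w \<partial>M) \<le> c s * (\<Sum>j<s. (\<integral>w. u j w \<partial>M) + b * (\<integral>w. h j w \<partial>M))"
  using \<open>s < n\<close>
proof (induction s rule: less_induct)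
  case (less s)
  have h_integrable_below: "integrable M (h j)" if "j < s" for j
    using less.IH[OF that] that less.prems by auto
  then have bound_integrable: "integrable M (\<lambda>w. c s * (\<Sum>j<s. u j w + b * h j w))"
    using u_integrable less.prems by auto
  have h_integrable: "integrable M (h s)"
    using bound_integrable h_measurable[OF less.prems]
  proof (rule Bochner_Integration.integrable_bound)
    show "AE w in M. norm (h s w) \<le> norm (c s * (\<Sum>j<s. u j w + b * h j w))"
      using h_bound[OF less.prems] by eventually_elim (simp add: h_nonneg)
  qed
  have "(\<integral>w. h s w \<partial>M) \<le> (\<integral>w. c s * (\<Sum>j<s. u j w + b * h j w) \<partial>M)"
    by (rule integral_mono_AE[OF h_integrable bound_integrable h_bound[OF less.prems]])
  also have "\<dots> = c s * (\<Sum>j<s. (\<integral>w. u j w \<partial>M) + b * (\<integral>w. h j w \<partial>M))"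
    using h_integrable_below u_integrable less.prems by simp
  finally show ?case
    using h_integrable by simp
qed

lemma sum_le_of_drift_recursion:
  fixes e :: "nat \<Rightarrow> real"
  assumes e_nonneg: "\<And>s. 0 \<le> e s"
    and X_nonneg: "0 \<le> X" and K_nonneg: "0 \<le> K" and b_nonneg: "0 \<le> b"
    and recursion: "\<And>s. s < \<tau> \<Longrightarrow> e s \<le> K * (real s * (real s + 1)) * (\<Sum>j<s. X + b * e j)"
  shows "(1 - K * b * real \<tau> ^ 3) * (\<Sum>s<\<tau>. e s) \<le> K * real \<tau> ^ 4 * X / 2"
proof -
  define S where "S = (\<Sum>s<\<tau>. e s)"
  have e_le: "e s \<le> K * (real \<tau>)\<^sup>2 * (real s * X + b * S)" if "s < \<tau>" for s
  proof -
    have "(\<Sum>j<s. X + b * e j) \<le> real s * X + b * S"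
      unfolding S_def sum.distrib sum_distrib_left[symmetric] using that b_nonneg
      by (auto intro!: mult_left_mono sum_mono2 e_nonneg)
    moreover have "real s * (real s + 1) \<le> (real \<tau>)\<^sup>2"
      using that by (simp add: power2_eq_square mult_mono)
    moreover have "0 \<le> (\<Sum>j<s. X + b * e j)"
      using X_nonneg b_nonneg by (intro sum_nonneg) (simp add: e_nonneg)
    ultimately have "K * (real s * (real s + 1)) * (\<Sum>j<s. X + b * e j) \<le> K * (real \<tau>)\<^sup>2 * (real s * X + b * S)"
      using K_nonneg by (intro mult_mono mult_left_mono) auto
    then show ?thesis
      using recursion[OF that] by linarith
  qed
  have "S \<le> (\<Sum>s<\<tau>. K * (real \<tau>)\<^sup>2 * (real s * X + b * S))"
    unfolding S_def by (intro sum_mono e_le[unfolded S_def]) simp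
  also have "\<dots> = K * (real \<tau>)\<^sup>2 * ((\<Sum>s<\<tau>. real s) * X + real \<tau> * b * S)"
    by (simp add: sum_distrib_left sum.distrib sum_distrib_right algebra_simps)
  also have "\<dots> \<le> K * (real \<tau>)\<^sup>2 * ((real \<tau>)\<^sup>2 / 2 * X + real \<tau> * b * S)"
  proof -
    have gauss: "2 * (\<Sum>s<n. real s) + real n = real n * real n" for n
      by (induction n) (simp_all add: algebra_simps)
    have "(\<Sum>s<\<tau>. real s) \<le> (real \<tau>)\<^sup>2 / 2"
      unfolding power2_eq_square using gauss[of \<tau>] by linarith
    then show ?thesis
      using X_nonneg K_nonneg by (intro mult_left_mono add_right_mono mult_right_mono) auto
  qed
  finally show ?thesis
    unfolding S_def[symmetric] by (simp add: algebra_simps power2_eq_square power3_eq_cube power4_eq_xxxx)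
qed

lemma expected_drift_le_recursive:
  fixes M :: "'w measure" and P :: "'w \<Rightarrow> real^'r::finite^'d::finite" and g :: "nat \<Rightarrow> 'w \<Rightarrow> real^'d"
    and G :: "real^'d \<Rightarrow> real^'d" and Gf \<theta>0 :: "real^'d" and \<mu> \<eta> L \<sigma>L \<sigma>G :: real
  defines "\<theta> \<equiv> \<lambda>s w. fedslop_theta \<mu> \<eta> \<theta>0 (proj_of (P w)) (\<lambda>s'. g s' w) s"
  assumes prob: "prob_space M" and haar: "haar_stiefel M P"
    and mu: "0 \<le> \<mu>" "\<mu> < 1"
    and g_measurable: "\<And>s. s < \<tau> \<Longrightarrow> g s \<in> borel_measurable M"
    and noise_integrable: "\<And>s. s < \<tau> \<Longrightarrow> integrable M (\<lambda>w. (norm (g s w - G (\<theta> s w)))\<^sup>2)"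
    and noise_bound: "\<And>s. s < \<tau> \<Longrightarrow> (\<integral>w. (norm (g s w - G (\<theta> s w)))\<^sup>2 \<partial>M) \<le> \<sigma>L\<^sup>2"
    and lipschitz: "\<And>x y. norm (G x - G y) \<le> L * norm (x - y)"
    and heterogeneity: "(norm (G \<theta>0 - Gf))\<^sup>2 \<le> \<sigma>G\<^sup>2"
    and "s < \<tau>"
  shows "(\<integral>w. (norm (\<theta> s w - \<theta>0))\<^sup>2 \<partial>M) \<le> 4 * \<eta>\<^sup>2 * (real s * (real s + 1) / (1 - \<mu>\<^sup>2)) *
           (\<Sum>j<s. real CARD('r) / real CARD('d) * (norm Gf)\<^sup>2 + \<sigma>L\<^sup>2 + \<sigma>G\<^sup>2
                    + L\<^sup>2 * (\<integral>w. (norm (\<theta> j w - \<theta>0))\<^sup>2 \<partial>M))"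
proof -
  interpret prob_space M by (rule prob)
  define e where "e s = (\<integral>w. (norm (\<theta> s w - \<theta>0))\<^sup>2 \<partial>M)" for s
  define c where "c s = 4 * \<eta>\<^sup>2 * (real s * (real s + 1) / (1 - \<mu>\<^sup>2))" for s
  define u where "u j w = (norm (g j w - G (\<theta> j w)))\<^sup>2 + \<sigma>G\<^sup>2 + (norm (proj_of (P w) *v Gf))\<^sup>2" for j w
  have "\<mu>\<^sup>2 < 1"
    using mu by (simp add: abs_square_less_1)
  then have c_nonneg: "0 \<le> c s" for s
    by (simp add: c_def)
  have u_integrable: "integrable M (u j)" if "j < \<tau>" for j
    unfolding u_def using that noise_integrable haar_stiefel_norm_proj_of_sq(1)[OF prob haar] by simp
  have u_integral: "(\<integral>w. u j w \<partial>M) \<le> real CARD('r) / real CARD('d) * (norm Gf)\<^sup>2 + \<sigma>L\<^sup>2 + \<sigma>G\<^sup>2"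
    if "j < \<tau>" for j
    unfolding u_def using that noise_integrable noise_bound[OF that]
      haar_stiefel_norm_proj_of_sq[OF prob haar] by (simp add: prob_space)
  have "integrable M (\<lambda>w. (norm (\<theta> s w - \<theta>0))\<^sup>2) \<and>
      e s \<le> c s * (\<Sum>j<s. (\<integral>w. u j w \<partial>M) + L\<^sup>2 * e j)"
    unfolding e_def
  proof (rule integrable_integral_le_recursive[where h="\<lambda>s w. (norm (\<theta> s w - \<theta>0))\<^sup>2"])
    show "(\<lambda>w. (norm (\<theta> s w - \<theta>0))\<^sup>2) \<in> borel_measurable M" if "s < \<tau>" for s
    proof -
      have "\<theta> s \<in> borel_measurable M"
        unfolding \<theta>_def using g_measurable that
        by (intro borel_measurable_fedslop_theta haar_stiefelD(1)[OF haar]) auto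
      then show ?thesis
        by (intro borel_measurable_power borel_measurable_norm borel_measurable_diff) simp_all
    qed
    show "AE w in M. (norm (\<theta> s w - \<theta>0))\<^sup>2 \<le> c s * (\<Sum>j<s. u j w + L\<^sup>2 * (norm (\<theta> j w - \<theta>0))\<^sup>2)" for s
      using haar_stiefelD(2)[OF haar]
    proof eventually_elim
      case (elim w)
      show ?case
        unfolding \<theta>_def c_def u_def
        by (rule fedslop_theta_dist_sq_le_noise[OF mu stiefel_norm_proj_of_le[OF elim]
              lipschitz heterogeneity])
    qed
  qed (use u_integrable \<open>s < \<tau>\<close> in auto)
  then have "e s \<le> c s * (\<Sum>j<s. (\<integral>w. u j w \<partial>M) + L\<^sup>2 * e j)"
    by blast
  also have "c s * (\<Sum>j<s. (\<integral>w. u j w \<partial>M) + L\<^sup>2 * e j)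
      \<le> c s * (\<Sum>j<s. real CARD('r) / real CARD('d) * (norm Gf)\<^sup>2 + \<sigma>L\<^sup>2 + \<sigma>G\<^sup>2 + L\<^sup>2 * e j)"
    using u_integral \<open>s < \<tau>\<close> by (intro mult_left_mono c_nonneg sum_mono add_right_mono) auto
  finally show ?thesis
    by (simp add: c_def e_def)
qed

lemma expected_drift_sum_le:
  fixes M :: "'w measure" and P :: "'w \<Rightarrow> real^'r::finite^'d::finite" and g :: "nat \<Rightarrow> 'w \<Rightarrow> real^'d"
    and G :: "real^'d \<Rightarrow> real^'d" and Gf \<theta>0 :: "real^'d" and \<mu> \<eta> L \<sigma>L \<sigma>G :: real
  defines "\<theta> \<equiv> \<lambda>s w. fedslop_theta \<mu> \<eta> \<theta>0 (proj_of (P w)) (\<lambda>s'. g s' w) s"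
  assumes prob: "prob_space M" and haar: "haar_stiefel M P"
    and mu: "0 \<le> \<mu>" "\<mu> < 1"
    and g_measurable: "\<And>s. s < \<tau> \<Longrightarrow> g s \<in> borel_measurable M"
    and noise_integrable: "\<And>s. s < \<tau> \<Longrightarrow> integrable M (\<lambda>w. (norm (g s w - G (\<theta> s w)))\<^sup>2)"
    and noise_bound: "\<And>s. s < \<tau> \<Longrightarrow> (\<integral>w. (norm (g s w - G (\<theta> s w)))\<^sup>2 \<partial>M) \<le> \<sigma>L\<^sup>2"
    and lipschitz: "\<And>x y. norm (G x - G y) \<le> L * norm (x - y)"
    and heterogeneity: "(norm (G \<theta>0 - Gf))\<^sup>2 \<le> \<sigma>G\<^sup>2"
    and eta_small: "\<eta>\<^sup>2 \<le> (1 - \<mu>\<^sup>2) / (6 * L\<^sup>2 * real \<tau> ^ 3)"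
  shows "(\<Sum>s<\<tau>. \<integral>w. (norm (\<theta> s w - \<theta>0))\<^sup>2 \<partial>M)
           \<le> 6 * real \<tau> ^ 4 / (1 - \<mu>\<^sup>2) * \<eta>\<^sup>2
              * (real CARD('r) / real CARD('d) * (norm Gf)\<^sup>2 + \<sigma>L\<^sup>2 + \<sigma>G\<^sup>2)"
proof -
  define X where "X = real CARD('r) / real CARD('d) * (norm Gf)\<^sup>2 + \<sigma>L\<^sup>2 + \<sigma>G\<^sup>2"
  define K where "K = 4 * \<eta>\<^sup>2 / (1 - \<mu>\<^sup>2)"
  define S where "S = (\<Sum>s<\<tau>. \<integral>w. (norm (\<theta> s w - \<theta>0))\<^sup>2 \<partial>M)"
  have mu_sq: "\<mu>\<^sup>2 < 1"
    using mu by (simp add: abs_square_less_1)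
  have "0 \<le> X"
    unfolding X_def by simp
  have summed: "(1 - K * L\<^sup>2 * real \<tau> ^ 3) * S \<le> K * real \<tau> ^ 4 * X / 2"
    unfolding S_def
  proof (rule sum_le_of_drift_recursion)
    show "(\<integral>w. (norm (\<theta> s w - \<theta>0))\<^sup>2 \<partial>M)
        \<le> K * (real s * (real s + 1)) * (\<Sum>j<s. X + L\<^sup>2 * (\<integral>w. (norm (\<theta> j w - \<theta>0))\<^sup>2 \<partial>M))"
      if "s < \<tau>" for s
      using expected_drift_le_recursive[OF prob haar mu g_measurable
          noise_integrable[unfolded \<theta>_def] noise_bound[unfolded \<theta>_def] lipschitz heterogeneity that]
      unfolding \<theta>_def K_def X_def by (simp add: add.assoc)
  qed (use mu_sq \<open>0 \<le> X\<close> in \<open>simp_all add: K_def\<close>)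
  have step_size: "K * L\<^sup>2 * real \<tau> ^ 3 \<le> 2 / 3"
  proof (cases "L\<^sup>2 * real \<tau> ^ 3 = 0")
    case False
    then have "\<eta>\<^sup>2 * (6 * L\<^sup>2 * real \<tau> ^ 3) \<le> 1 - \<mu>\<^sup>2"
      using eta_small by (simp add: le_divide_eq mult.assoc)
    then show ?thesis
      using mu_sq by (simp add: K_def field_simps)
  qed auto
  have "0 \<le> S"
    unfolding S_def by (intro sum_nonneg integral_nonneg_AE) simp
  then have "(1 / 3) * S \<le> (1 - K * L\<^sup>2 * real \<tau> ^ 3) * S"
    using step_size by (intro mult_right_mono) simp_all
  then have "S \<le> 3 / 2 * K * real \<tau> ^ 4 * X"
    using summed by simp
  then show ?thesis
    unfolding S_def X_def K_def by (simp add: field_simps)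
qed

theorem lemma2:
  fixes M :: "'w measure"
    and P :: "'w \<Rightarrow> real^'r::finite^'d::finite"
    and g :: "nat \<Rightarrow> nat \<Rightarrow> 'w \<Rightarrow> real^'d"
    and F :: "nat \<Rightarrow> real^'d \<Rightarrow> real"
    and gradF :: "nat \<Rightarrow> real^'d \<Rightarrow> real^'d"
    and N \<tau> :: nat
    and \<mu> \<eta> L fstar \<sigma>L \<sigma>G :: real
    and \<theta>0 :: "real^'d"
  defines "f \<equiv> (\<lambda>x. (\<Sum>i<N. F i x) / real N)"
    and "gradf \<equiv> (\<lambda>x. (1 / real N) *\<^sub>R (\<Sum>i<N. gradF i x))"
    and "\<delta> \<equiv> real CARD('r) / real CARD('d)"
    and "\<theta> \<equiv> (\<lambda>i s w. fedslop_theta \<mu> \<eta> \<theta>0 (proj_of (P w)) (\<lambda>s'. g i s' w) s)"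
    and "D \<equiv> (1 / real N) * (\<Sum>i<N. \<Sum>s<\<tau>. (\<integral>w. (norm (fedslop_theta \<mu> \<eta> \<theta>0 (proj_of (P w)) (\<lambda>s'. g i s' w) s - \<theta>0))\<^sup>2 \<partial>M))"
  assumes N_pos: "N > 0" and tau_pos: "\<tau> > 0"
    and r_le_d: "CARD('r) \<le> CARD('d)"
    and mu: "0 \<le> \<mu>" "\<mu> < 1"
    and eta_pos: "\<eta> > 0" and L_pos: "L > 0"
    (* A1 *)
    and F_grad: "\<And>i x. i < N \<Longrightarrow> GDERIV (F i) x :> gradF i x"
    and f_lower: "\<And>x. fstar \<le> f x"
    and F_smooth: "\<And>i x y. i < N \<Longrightarrow> norm (gradF i x - gradF i y) \<le> L * norm (x - y)"
    and f_smooth: "\<And>x y. norm (gradf x - gradf y) \<le> L * norm (x - y)"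
    (* algorithm randomness: Haar projection *)
    and prob: "prob_space M"
    and haar: "haar_stiefel M P"
    (* A2: stochastic gradients *)
    and g_meas: "\<And>i s. i < N \<Longrightarrow> s < \<tau> \<Longrightarrow> g i s \<in> borel_measurable M"
    and g_int: "\<And>i s k. i < N \<Longrightarrow> s < \<tau> \<Longrightarrow> integrable M (\<lambda>w. g i s w $ k)"
    and g_unbiased: "\<And>i s k. i < N \<Longrightarrow> s < \<tau> \<Longrightarrow>
        AE w in M. real_cond_exp M (before_step M P g N s) (\<lambda>w. g i s w $ k) w
                   = gradF i (\<theta> i s w) $ k"
    and g_var_int: "\<And>i s. i < N \<Longrightarrow> s < \<tau> \<Longrightarrow>
        integrable M (\<lambda>w. (norm (g i s w - gradF i (\<theta> i s w)))\<^sup>2)"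
    and g_var: "\<And>i s. i < N \<Longrightarrow> s < \<tau> \<Longrightarrow>
        AE w in M. real_cond_exp M (before_step M P g N s)
                     (\<lambda>w. (norm (g i s w - gradF i (\<theta> i s w)))\<^sup>2) w \<le> \<sigma>L\<^sup>2"
    and heterog: "\<And>i x. i < N \<Longrightarrow> (norm (gradF i x - gradf x))\<^sup>2 \<le> \<sigma>G\<^sup>2"
    (* stepsize *)
    and eta_small: "\<eta>\<^sup>2 \<le> (1 - \<mu>\<^sup>2) / (6 * L\<^sup>2 * real \<tau> ^ 3)"
  shows "D \<le> 6 * real \<tau> ^ 4 / (1 - \<mu>\<^sup>2) * \<eta>\<^sup>2
              * (\<delta> * (norm (gradf \<theta>0))\<^sup>2 + \<sigma>L\<^sup>2 + \<sigma>G\<^sup>2)"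
proof -
  (* Only the smoothness of the F_i and the second-moment parts of A1/A2 enter the drift bound. *)
  have noise_bound: "(\<integral>w. (norm (g i s w - gradF i (\<theta> i s w)))\<^sup>2 \<partial>M) \<le> \<sigma>L\<^sup>2"
    if "i < N" "s < \<tau>" for i s
  proof (rule integral_le_of_real_cond_exp_le[OF prob _ g_var_int[OF that] g_var[OF that]])
    show "subalgebra M (before_step M P g N s)"
      using haar_stiefelD(1)[OF haar] g_meas that(2) by (intro subalgebra_before_step) auto
  qed
  have client: "(\<Sum>s<\<tau>. \<integral>w. (norm (\<theta> i s w - \<theta>0))\<^sup>2 \<partial>M)
      \<le> 6 * real \<tau> ^ 4 / (1 - \<mu>\<^sup>2) * \<eta>\<^sup>2 * (\<delta> * (norm (gradf \<theta>0))\<^sup>2 + \<sigma>L\<^sup>2 + \<sigma>G\<^sup>2)"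
    if "i < N" for i
    using expected_drift_sum_le[OF prob haar mu g_meas[OF that]
        g_var_int[OF that, unfolded \<theta>_def] noise_bound[OF that, unfolded \<theta>_def] F_smooth[OF that]
        heterog[OF that] eta_small]
    unfolding \<theta>_def \<delta>_def by simp
  have "D \<le> 1 / real N * (\<Sum>i<N. 6 * real \<tau> ^ 4 / (1 - \<mu>\<^sup>2) * \<eta>\<^sup>2
                                    * (\<delta> * (norm (gradf \<theta>0))\<^sup>2 + \<sigma>L\<^sup>2 + \<sigma>G\<^sup>2))"
    unfolding D_def using client unfolding \<theta>_def by (intro mult_left_mono sum_mono) auto
  then show ?thesis
    using N_pos by simp
qed

end
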